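(* Let $A$ be a von Neumann algebra and let $F\subseteq\Sigma^\ast$ be an irreducible closed set (whenever $F=F_1\cup F_2$ with $F_1,F_2$ closed, $F=F_1$ or $F=F_2$). Suppose there is $C\in\mathcal V(A)$ with $F_C\neq\emptyset$ and $F_D=\emptyset$ for all $D\in\mathcal V(A)$ with $D\subsetneq C$. Then there is a unique $\lambda\in\Sigma_C$ such that $F$ is the closure of the point $(C,\lambda)$ in $\Sigma^\ast$.
   Context: Let $A$ be a von Neumann algebra. $\mathcal{V}(A)$ denotes the set of abelian von Neumann subalgebras $C\subseteq A$ containing the unit of $A$, partially ordered by inclusion. For $C\in\mathcal V(A)$, $\Sigma_C$ denotes the Gelfand spectrum of $C$, with restriction maps $\lambda\mapsto\lambda|_D$ for $D\subseteq C$. Let $\Sigma=\{(C,\lambda)\mid C\in\mathcal V(A),\lambda\in\Sigma_C\}$ and $U_C=\{\lambda\mid(C,\lambda)\in U\}$ for $U\subseteq\Sigma$. The space $\Sigma^\ast$ is $\Sigma$ with the topology in which $U$ is open iff (1) each $U_C$ is open in $\Sigma_C$ and (2) $\lambda\in U_C$, $D\subseteq C$ imply $\lambda|_D\in U_D$. *)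

theory Defs
  imports "HOL-Analysis.Analysis"
begin

class cvector = real_vector +
  fixes cscale :: "complex \<Rightarrow> 'a \<Rightarrow> 'a"
  assumes cscale_add_right: "cscale a (x + y) = cscale a x + cscale a y"
    and cscale_add_left: "cscale (a + b) x = cscale a x + cscale b x"
    and cscale_cscale: "cscale a (cscale b x) = cscale (a * b) x"
    and cscale_one: "cscale 1 x = x"
    and scaleR_cscale: "scaleR r x = cscale (complex_of_real r) x"

class cinner_space = cvector + real_normed_vector +
  fixes cinner :: "'a \<Rightarrow> 'a \<Rightarrow> complex"
  assumes cinner_conj_sym: "cinner x y = cnj (cinner y x)"
    and cinner_add_right: "cinner x (y + z) = cinner x y + cinner x z"
    and cinner_cscale_right: "cinner x (cscale c y) = c * cinner x y"
    and cinner_nonneg: "0 \<le> Re (cinner x x)"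
    and cinner_eq_zero_iff: "cinner x x = 0 \<longleftrightarrow> x = 0"
    and norm_eq_sqrt_cinner: "norm x = sqrt (Re (cinner x x))"

class chilbert_space = cinner_space + complete_space

definition bounded_clinear :: "('h::chilbert_space \<Rightarrow> 'h) \<Rightarrow> bool" where
  "bounded_clinear T \<longleftrightarrow>
     (\<forall>x y. T (x + y) = T x + T y) \<and> (\<forall>c x. T (cscale c x) = cscale c (T x)) \<and>
     (\<exists>K. \<forall>x. norm (T x) \<le> norm x * K)"

definition adjoint :: "('h::chilbert_space \<Rightarrow> 'h) \<Rightarrow> ('h \<Rightarrow> 'h)" where
  "adjoint T = (SOME S. \<forall>x y. cinner (T x) y = cinner x (S y))"

definition commutant :: "('h::chilbert_space \<Rightarrow> 'h) set \<Rightarrow> ('h \<Rightarrow> 'h) set" where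
  "commutant S = {T. bounded_clinear T \<and> (\<forall>s\<in>S. T \<circ> s = s \<circ> T)}"

text \<open>A von Neumann algebra on H: a self-adjoint set of bounded operators equal to its
  bicommutant (equivalently, by the double commutant theorem, a weakly closed unital
  *-subalgebra of B(H)).\<close>
definition von_neumann_algebra :: "('h::chilbert_space \<Rightarrow> 'h) set \<Rightarrow> bool" where
  "von_neumann_algebra M \<longleftrightarrow>
     M \<subseteq> Collect bounded_clinear \<and> (\<forall>T\<in>M. adjoint T \<in> M) \<and> commutant (commutant M) = M"

definition abelian_subalgebras :: "('h::chilbert_space \<Rightarrow> 'h) set \<Rightarrow> ('h \<Rightarrow> 'h) set set" where
  "abelian_subalgebras A =
     {C. von_neumann_algebra C \<and> C \<subseteq> A \<and> id \<in> C \<and> (\<forall>x\<in>C. \<forall>y\<in>C. x \<circ> y = y \<circ> x)}"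

text \<open>Characters of C, represented as functions on all operators vanishing off C.
  The Gelfand (weak-*) topology is the subspace topology of the product (pointwise)
  topology on functions.\<close>
definition gelfand_spectrum :: "('h::chilbert_space \<Rightarrow> 'h) set \<Rightarrow> (('h \<Rightarrow> 'h) \<Rightarrow> complex) set" where
  "gelfand_spectrum C =
     {l. (\<forall>x\<in>C. \<forall>y\<in>C. l (\<lambda>z. x z + y z) = l x + l y \<and> l (x \<circ> y) = l x * l y) \<and>
         (\<forall>c. \<forall>x\<in>C. l (\<lambda>z. cscale c (x z)) = c * l x) \<and>
         l id = 1 \<and> (\<forall>x. x \<notin> C \<longrightarrow> l x = 0)}"

definition spectrum_top :: "('h::chilbert_space \<Rightarrow> 'h) set \<Rightarrow> (('h \<Rightarrow> 'h) \<Rightarrow> complex) topology" where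
  "spectrum_top C = subtopology euclidean (gelfand_spectrum C)"

definition restr :: "('h \<Rightarrow> 'h) set \<Rightarrow> (('h \<Rightarrow> 'h) \<Rightarrow> complex) \<Rightarrow> (('h \<Rightarrow> 'h) \<Rightarrow> complex)" where
  "restr D l = (\<lambda>x. if x \<in> D then l x else 0)"

definition Sigma_set :: "('h::chilbert_space \<Rightarrow> 'h) set \<Rightarrow> (('h \<Rightarrow> 'h) set \<times> (('h \<Rightarrow> 'h) \<Rightarrow> complex)) set" where
  "Sigma_set A = {(C, l). C \<in> abelian_subalgebras A \<and> l \<in> gelfand_spectrum C}"

definition slice :: "('c \<times> 'l) set \<Rightarrow> 'c \<Rightarrow> 'l set" where
  "slice U C = {l. (C, l) \<in> U}"

definition sigma_star_open :: "('h::chilbert_space \<Rightarrow> 'h) set \<Rightarrow> (('h \<Rightarrow> 'h) set \<times> (('h \<Rightarrow> 'h) \<Rightarrow> complex)) set \<Rightarrow> bool" where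
  "sigma_star_open A U \<longleftrightarrow>
     U \<subseteq> Sigma_set A \<and>
     (\<forall>C \<in> abelian_subalgebras A. openin (spectrum_top C) (slice U C)) \<and>
     (\<forall>C l D. (C, l) \<in> U \<longrightarrow> D \<in> abelian_subalgebras A \<longrightarrow> D \<subseteq> C \<longrightarrow> (D, restr D l) \<in> U)"

definition Sigma_star :: "('h::chilbert_space \<Rightarrow> 'h) set \<Rightarrow> (('h \<Rightarrow> 'h) set \<times> (('h \<Rightarrow> 'h) \<Rightarrow> complex)) topology" where
  "Sigma_star A = topology (sigma_star_open A)"

end

theory Submission
  imports Defs
begin

text \<open>
  Say that a point (D, mu) of Sigma* lies above C with
  trace in T when C is contained in D and the restriction of mu to C lies in T.  Restriction
  is continuous, so for closed T this set is closed in Sigma*; and the closure of a point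
  (C, l) is exactly the set of points lying above C with trace l, because closed sets of
  Sigma* are closed under passing to larger algebras.  Now let F be irreducible and closed
  with C minimal among the algebras meeting F.  The points of F over subalgebras of C form
  an open set whose complement in F misses the slice F_C, so irreducibility forces every
  point of F to lie above C with trace in F_C.  Two distinct characters in F_C differ at some
  operator, so the character space is covered by two closed sets each missing one of them;
  this would split F again.  Hence F_C = {l}, and F is the closure of (C, l).
\<close>

lemma bounded_clinearI:
  "(\<And>x y. T (x + y) = T x + T y) \<Longrightarrow> (\<And>c x. T (cscale c x) = cscale c (T x))
    \<Longrightarrow> (\<And>x. norm (T x) \<le> norm x * K) \<Longrightarrow> bounded_clinear T"
  unfolding bounded_clinear_def by blast

lemma bounded_clinear_add_apply: "bounded_clinear T \<Longrightarrow> T (x + y) = T x + T y"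
  unfolding bounded_clinear_def by blast

lemma bounded_clinear_cscale_apply: "bounded_clinear T \<Longrightarrow> T (cscale c x) = cscale c (T x)"
  unfolding bounded_clinear_def by blast

lemma bounded_clinear_nonneg_bound:
  assumes "bounded_clinear T"
  obtains K where "K \<ge> 0" "\<And>x. norm (T x) \<le> norm x * K"
proof -
  obtain K where K: "\<And>x. norm (T x) \<le> norm x * K"
    using assms unfolding bounded_clinear_def by blast
  have "norm (T x) \<le> norm x * max K 0" for x
    using K[of x] mult_left_mono[of K "max K 0" "norm x"] by simp
  moreover have "max K 0 \<ge> 0" by simp
  ultimately show thesis using that by blast
qed

lemma norm_cscale: "norm (cscale c (v::'a::cinner_space)) = cmod c * norm v"
proof -
  have self_real: "cnj (cinner v v) = cinner v v" by (rule cinner_conj_sym[symmetric])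
  have "cinner (cscale c v) (cscale c v) = c * cnj (c * cinner v v)"
    by (simp only: cinner_cscale_right cinner_conj_sym[of "cscale c v" v])
  also have "\<dots> = complex_of_real ((cmod c)\<^sup>2) * cinner v v"
    by (simp only: complex_cnj_mult self_real mult.assoc[symmetric] complex_norm_square)
  finally have "Re (cinner (cscale c v) (cscale c v)) = (cmod c)\<^sup>2 * Re (cinner v v)"
    by simp
  then show ?thesis by (simp add: norm_eq_sqrt_cinner real_sqrt_mult)
qed

lemma bounded_clinear_add:
  assumes x: "bounded_clinear x" and y: "bounded_clinear y"
  shows "bounded_clinear (\<lambda>z. x z + y z)"
proof -
  obtain K1 where K1: "K1 \<ge> 0" "\<And>a. norm (x a) \<le> norm a * K1"
    using bounded_clinear_nonneg_bound[OF x] by blast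
  obtain K2 where K2: "K2 \<ge> 0" "\<And>a. norm (y a) \<le> norm a * K2"
    using bounded_clinear_nonneg_bound[OF y] by blast
  show ?thesis
  proof (rule bounded_clinearI)
    fix a
    have "norm (x a + y a) \<le> norm a * K1 + norm a * K2"
      using norm_triangle_ineq[of "x a" "y a"] K1(2)[of a] K2(2)[of a] by linarith
    then show "norm (x a + y a) \<le> norm a * (K1 + K2)" by (simp add: distrib_left)
  qed (simp_all add: bounded_clinear_add_apply[OF x] bounded_clinear_add_apply[OF y]
      bounded_clinear_cscale_apply[OF x] bounded_clinear_cscale_apply[OF y] cscale_add_right ac_simps)
qed

lemma bounded_clinear_comp:
  assumes x: "bounded_clinear x" and y: "bounded_clinear y"
  shows "bounded_clinear (x \<circ> y)"
proof -
  obtain K1 where K1: "K1 \<ge> 0" "\<And>a. norm (x a) \<le> norm a * K1"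
    using bounded_clinear_nonneg_bound[OF x] by blast
  obtain K2 where K2: "K2 \<ge> 0" "\<And>a. norm (y a) \<le> norm a * K2"
    using bounded_clinear_nonneg_bound[OF y] by blast
  show ?thesis
  proof (rule bounded_clinearI)
    fix a
    have "norm (x (y a)) \<le> norm (y a) * K1" by (rule K1(2))
    also have "\<dots> \<le> norm a * K2 * K1" using K2(2) K1(1) by (rule mult_right_mono)
    finally show "norm ((x \<circ> y) a) \<le> norm a * (K2 * K1)" by (simp add: mult.assoc)
  qed (simp_all add: bounded_clinear_add_apply[OF x] bounded_clinear_add_apply[OF y]
      bounded_clinear_cscale_apply[OF x] bounded_clinear_cscale_apply[OF y])
qed

lemma bounded_clinear_cscale:
  assumes x: "bounded_clinear x"
  shows "bounded_clinear (\<lambda>z. cscale c (x z))"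
proof -
  obtain K where K: "K \<ge> 0" "\<And>a. norm (x a) \<le> norm a * K"
    using bounded_clinear_nonneg_bound[OF x] by blast
  show ?thesis
  proof (rule bounded_clinearI)
    fix d a
    show "cscale c (x (cscale d a)) = cscale d (cscale c (x a))"
      by (simp add: bounded_clinear_cscale_apply[OF x] cscale_cscale mult.commute)
  next
    fix a
    have "norm (cscale c (x a)) \<le> cmod c * (norm a * K)"
      unfolding norm_cscale using K(2) by (rule mult_left_mono) simp
    then show "norm (cscale c (x a)) \<le> norm a * (cmod c * K)" by (simp add: ac_simps)
  qed (simp add: bounded_clinear_add_apply[OF x] cscale_add_right)
qed

lemma commutant_iff:
  "T \<in> commutant S \<longleftrightarrow> bounded_clinear T \<and> (\<forall>s\<in>S. \<forall>a. T (s a) = s (T a))"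
  unfolding commutant_def by (auto simp: fun_eq_iff)

text \<open>The commutant of a set of bounded operators is closed under sums, products and
  scaling; this is where linearity of the commuting operators is used.\<close>
lemma commutant_closed:
  assumes S: "S \<subseteq> Collect bounded_clinear" and x: "x \<in> commutant S" and y: "y \<in> commutant S"
  shows "(\<lambda>z. x z + y z) \<in> commutant S" "x \<circ> y \<in> commutant S"
    "(\<lambda>z. cscale c (x z)) \<in> commutant S"
proof -
  have x': "bounded_clinear x" "\<And>s a. s \<in> S \<Longrightarrow> x (s a) = s (x a)"
    and y': "bounded_clinear y" "\<And>s a. s \<in> S \<Longrightarrow> y (s a) = s (y a)"
    using x y unfolding commutant_iff by auto
  have s: "bounded_clinear s" if "s \<in> S" for s using S that by blast
  show "(\<lambda>z. x z + y z) \<in> commutant S"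
    unfolding commutant_iff using x' y' by (auto simp: s bounded_clinear_add bounded_clinear_add_apply)
  show "x \<circ> y \<in> commutant S"
    unfolding commutant_iff using x' y' bounded_clinear_comp by auto
  show "(\<lambda>z. cscale c (x z)) \<in> commutant S"
    unfolding commutant_iff using x' by (auto simp: s bounded_clinear_cscale bounded_clinear_cscale_apply)
qed

text \<open>A von Neumann algebra, being a bicommutant, inherits these closure properties.\<close>
lemma von_neumann_algebra_closed:
  assumes "von_neumann_algebra D" "x \<in> D" "y \<in> D"
  shows "(\<lambda>z. x z + y z) \<in> D" "x \<circ> y \<in> D" "(\<lambda>z. cscale c (x z)) \<in> D"
proof -
  have D: "D = commutant (commutant D)"
    using assms(1) unfolding von_neumann_algebra_def by auto
  have bounded: "commutant D \<subseteq> Collect bounded_clinear" unfolding commutant_def by auto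
  show "(\<lambda>z. x z + y z) \<in> D" "x \<circ> y \<in> D" "(\<lambda>z. cscale c (x z)) \<in> D"
    using commutant_closed[OF bounded, of x y] assms(2,3) D by auto
qed

lemma restr_gelfand_spectrum:
  assumes "l \<in> gelfand_spectrum C" "D \<in> abelian_subalgebras A" "D \<subseteq> C"
  shows "restr D l \<in> gelfand_spectrum D"
proof -
  have D: "von_neumann_algebra D" "id \<in> D"
    using assms(2) unfolding abelian_subalgebras_def by auto
  show ?thesis using assms(1,3) von_neumann_algebra_closed[OF D(1)] D(2)
    unfolding gelfand_spectrum_def restr_def by (auto simp: subset_iff)
qed

lemma restr_restr: "C \<subseteq> D \<Longrightarrow> restr C (restr D l) = restr C l"
  unfolding restr_def by (auto simp: fun_eq_iff)

lemma restr_self: "l \<in> gelfand_spectrum C \<Longrightarrow> restr C l = l"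
  unfolding restr_def gelfand_spectrum_def by auto

lemma continuous_on_restr: "continuous_on UNIV (restr C)"
proof (rule continuous_on_coordinatewise_then_product)
  show "continuous_on UNIV (\<lambda>l. restr C l i)" for i
    unfolding restr_def by (cases "i \<in> C") simp_all
qed

lemma Sigma_set_restr:
  "(C, l) \<in> Sigma_set A \<Longrightarrow> D \<in> abelian_subalgebras A \<Longrightarrow> D \<subseteq> C \<Longrightarrow>
    (D, restr D l) \<in> Sigma_set A"
  unfolding Sigma_set_def by (auto intro: restr_gelfand_spectrum)

lemma sigma_star_openI:
  assumes "U \<subseteq> Sigma_set A"
    and "\<And>C. C \<in> abelian_subalgebras A \<Longrightarrow> openin (spectrum_top C) (slice U C)"
    and "\<And>C l D. (C, l) \<in> U \<Longrightarrow> D \<in> abelian_subalgebras A \<Longrightarrow> D \<subseteq> C \<Longrightarrow>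
      (D, restr D l) \<in> U"
  shows "sigma_star_open A U"
  using assms unfolding sigma_star_open_def by blast

lemma istopology_sigma_star_open: "istopology (sigma_star_open A)"
proof -
  have "sigma_star_open A (S \<inter> T)" if S: "sigma_star_open A S" and T: "sigma_star_open A T" for S T
  proof (rule sigma_star_openI)
    fix C assume "C \<in> abelian_subalgebras A"
    then have "openin (spectrum_top C) (slice S C \<inter> slice T C)"
      using S T unfolding sigma_star_open_def by (blast intro: openin_Int)
    moreover have "slice (S \<inter> T) C = slice S C \<inter> slice T C" unfolding slice_def by auto
    ultimately show "openin (spectrum_top C) (slice (S \<inter> T) C)" by simp
  qed (use S T in \<open>auto simp: sigma_star_open_def\<close>)
  moreover have "sigma_star_open A (\<Union>K)" if K: "\<forall>S\<in>K. sigma_star_open A S" for K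
  proof (rule sigma_star_openI)
    fix C assume "C \<in> abelian_subalgebras A"
    then have "openin (spectrum_top C) (\<Union>S\<in>K. slice S C)"
      using K unfolding sigma_star_open_def by (intro openin_Union) blast
    moreover have "slice (\<Union>K) C = (\<Union>S\<in>K. slice S C)" unfolding slice_def by auto
    ultimately show "openin (spectrum_top C) (slice (\<Union>K) C)" by simp
  next
    fix C l D assume "(C, l) \<in> \<Union>K" "D \<in> abelian_subalgebras A" "D \<subseteq> C"
    moreover obtain S where "S \<in> K" "(C, l) \<in> S" using \<open>(C, l) \<in> \<Union>K\<close> by blast
    ultimately show "(D, restr D l) \<in> \<Union>K" using K unfolding sigma_star_open_def by blast
  qed (use K in \<open>auto simp: sigma_star_open_def\<close>)
  ultimately show ?thesis unfolding istopology_def by blast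
qed

lemma openin_Sigma_star: "openin (Sigma_star A) = sigma_star_open A"
  unfolding Sigma_star_def by (rule topology_inverse'[OF istopology_sigma_star_open])

text \<open>The whole of Sigma is open, so it is the underlying set of Sigma*; this needs that
  restrictions of characters are characters.\<close>
lemma topspace_Sigma_star: "topspace (Sigma_star A) = Sigma_set A"
proof -
  have "sigma_star_open A (Sigma_set A)"
  proof (rule sigma_star_openI)
    fix C assume "C \<in> abelian_subalgebras A"
    then have "slice (Sigma_set A) C = topspace (spectrum_top C)"
      unfolding slice_def Sigma_set_def spectrum_top_def by simp
    then show "openin (spectrum_top C) (slice (Sigma_set A) C)" by simp
  qed (auto intro: Sigma_set_restr)
  then show ?thesis
    unfolding topspace_def openin_Sigma_star sigma_star_open_def by auto
qed

lemma closedin_Sigma_star: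
  "closedin (Sigma_star A) F \<longleftrightarrow> F \<subseteq> Sigma_set A \<and>
    (\<forall>C\<in>abelian_subalgebras A. closedin (spectrum_top C) (slice F C)) \<and>
    (\<forall>C l D. (C, l) \<in> Sigma_set A \<longrightarrow> D \<in> abelian_subalgebras A \<longrightarrow> D \<subseteq> C \<longrightarrow>
       (D, restr D l) \<in> F \<longrightarrow> (C, l) \<in> F)"
  (is "_ \<longleftrightarrow> _ \<and> ?slices_closed \<and> ?up_closed")
proof (cases "F \<subseteq> Sigma_set A")
  case True
  have "openin (spectrum_top C) (slice (Sigma_set A - F) C) \<longleftrightarrow>
      closedin (spectrum_top C) (slice F C)" if "C \<in> abelian_subalgebras A" for C
  proof -
    have "slice (Sigma_set A - F) C = gelfand_spectrum C - slice F C"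
      using that unfolding slice_def Sigma_set_def by auto
    moreover have "slice F C \<subseteq> gelfand_spectrum C"
      using True unfolding slice_def Sigma_set_def by auto
    ultimately show ?thesis by (simp add: closedin_def spectrum_top_def)
  qed
  then have "(\<forall>C\<in>abelian_subalgebras A. openin (spectrum_top C) (slice (Sigma_set A - F) C))
      \<longleftrightarrow> ?slices_closed" by blast
  moreover have "(\<forall>C l D. (C, l) \<in> Sigma_set A - F \<longrightarrow> D \<in> abelian_subalgebras A \<longrightarrow> D \<subseteq> C
      \<longrightarrow> (D, restr D l) \<in> Sigma_set A - F) \<longleftrightarrow> ?up_closed"
    using Sigma_set_restr by blast
  ultimately show ?thesis
    unfolding closedin_def topspace_Sigma_star openin_Sigma_star sigma_star_open_def
    using True by blast
qed (simp add: closedin_def topspace_Sigma_star)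

lemma closedin_Sigma_star_slice:
  "closedin (Sigma_star A) F \<Longrightarrow> C \<in> abelian_subalgebras A \<Longrightarrow>
    closedin (spectrum_top C) (slice F C)"
  unfolding closedin_Sigma_star by blast

lemma closedin_Sigma_star_up:
  "closedin (Sigma_star A) F \<Longrightarrow> (C, l) \<in> Sigma_set A \<Longrightarrow> D \<in> abelian_subalgebras A \<Longrightarrow>
    D \<subseteq> C \<Longrightarrow> (D, restr D l) \<in> F \<Longrightarrow> (C, l) \<in> F"
  unfolding closedin_Sigma_star by blast

definition points_above ::
  "('h::chilbert_space \<Rightarrow> 'h) set \<Rightarrow> ('h \<Rightarrow> 'h) set \<Rightarrow> (('h \<Rightarrow> 'h) \<Rightarrow> complex) set \<Rightarrow>
    (('h \<Rightarrow> 'h) set \<times> (('h \<Rightarrow> 'h) \<Rightarrow> complex)) set" where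
  "points_above A C T = {p \<in> Sigma_set A. C \<subseteq> fst p \<and> restr C (snd p) \<in> T}"

definition points_below ::
  "('h::chilbert_space \<Rightarrow> 'h) set \<Rightarrow> ('h \<Rightarrow> 'h) set \<Rightarrow>
    (('h \<Rightarrow> 'h) set \<times> (('h \<Rightarrow> 'h) \<Rightarrow> complex)) set" where
  "points_below A C = {p \<in> Sigma_set A. fst p \<subseteq> C}"

lemma mem_points_above:
  "(D, \<mu>) \<in> points_above A C T \<longleftrightarrow> (D, \<mu>) \<in> Sigma_set A \<and> C \<subseteq> D \<and> restr C \<mu> \<in> T"
  unfolding points_above_def by simp

text \<open>For closed T the points above C with trace in T form a closed set: restriction to C is
  continuous, and traces do not change when passing to larger algebras.\<close>
lemma closed_points_above:
  assumes C: "C \<in> abelian_subalgebras A" and T: "closed T"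
  shows "closedin (Sigma_star A) (points_above A C T)"
  unfolding closedin_Sigma_star
proof (intro conjI ballI allI impI)
  show "points_above A C T \<subseteq> Sigma_set A" unfolding points_above_def by blast
next
  fix D assume D: "D \<in> abelian_subalgebras A"
  show "closedin (spectrum_top D) (slice (points_above A C T) D)"
  proof (cases "C \<subseteq> D")
    case True
    then have "slice (points_above A C T) D = gelfand_spectrum D \<inter> restr C -` T"
      using D unfolding slice_def mem_points_above Sigma_set_def by auto
    moreover have "closed (restr C -` T)" using T continuous_on_restr by (rule closed_vimage)
    ultimately show ?thesis unfolding spectrum_top_def closedin_closed by blast
  next
    case False
    then have "slice (points_above A C T) D = {}" unfolding slice_def mem_points_above by auto
    then show ?thesis by simp
  qed
next
  fix E l D assume El: "(E, l) \<in> Sigma_set A" and "D \<subseteq> E" "(D, restr D l) \<in> points_above A C T"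
  then have "C \<subseteq> D" "restr C (restr D l) \<in> T" unfolding mem_points_above by auto
  then show "(E, l) \<in> points_above A C T"
    using El \<open>D \<subseteq> E\<close> restr_restr[of C D l] unfolding mem_points_above by auto
qed

lemma closedin_points_above:
  assumes C: "C \<in> abelian_subalgebras A" and T: "closedin (spectrum_top C) T"
  shows "closedin (Sigma_star A) (points_above A C T)"
proof -
  obtain T' where T': "closed T'" "T = gelfand_spectrum C \<inter> T'"
    using T unfolding spectrum_top_def closedin_closed by blast
  have "restr C \<mu> \<in> gelfand_spectrum C" if "(D, \<mu>) \<in> Sigma_set A" "C \<subseteq> D" for D \<mu>
    using that C unfolding Sigma_set_def by (auto intro: restr_gelfand_spectrum)
  then have "points_above A C T = points_above A C T'" unfolding points_above_def T'(2) by auto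
  then show ?thesis using closed_points_above[OF C T'(1)] by simp
qed

text \<open>The points over subalgebras of C form an open set, since restriction keeps them there.\<close>
lemma openin_points_below:
  assumes C: "C \<in> abelian_subalgebras A"
  shows "openin (Sigma_star A) (points_below A C)"
  unfolding openin_Sigma_star
proof (rule sigma_star_openI)
  fix E assume E: "E \<in> abelian_subalgebras A"
  have "slice (points_below A C) E = (if E \<subseteq> C then topspace (spectrum_top E) else {})"
    using E unfolding slice_def points_below_def Sigma_set_def spectrum_top_def by auto
  then show "openin (spectrum_top E) (slice (points_below A C) E)" by simp
next
  fix E l D assume "(E, l) \<in> points_below A C" "D \<in> abelian_subalgebras A" "D \<subseteq> E"
  then show "(D, restr D l) \<in> points_below A C"
    unfolding points_below_def using Sigma_set_restr[of E l A D] by auto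
qed (simp add: points_below_def)

lemma closed_singleton_fun: "closed {a :: 'a \<Rightarrow> 'b::t1_space}"
proof -
  have "{a} = (\<Inter>x. (\<lambda>f. f x) -` {a x})" by (auto simp: fun_eq_iff)
  moreover have "closed ((\<lambda>f. f x) -` {a x})" for x
    by (rule closed_vimage[OF closed_singleton]) simp
  ultimately show ?thesis by (simp add: closed_INT)
qed

text \<open>Two distinct functions into a Hausdorff space are each missed by one of two closed
  sets covering the function space (separate them at a coordinate where they differ).\<close>
lemma closed_cover_separating_fun:
  fixes a b :: "'a \<Rightarrow> 'b::t2_space"
  assumes "a \<noteq> b"
  obtains S T where "closed S" "closed T" "S \<union> T = UNIV" "a \<notin> S" "b \<notin> T"
proof -
  obtain x where "a x \<noteq> b x" using assms by (auto simp: fun_eq_iff)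
  then obtain U V where UV: "open U" "open V" "a x \<in> U" "b x \<in> V" "U \<inter> V = {}"
    by (metis hausdorff)
  have closed_preimage: "closed ((\<lambda>f. f x) -` (- W))" if "open W" for W
    using closed_Compl[OF that] by (rule closed_vimage) simp
  show thesis
  proof (rule that)
    show "closed ((\<lambda>f. f x) -` (- U))" using UV(1) by (rule closed_preimage)
    show "closed ((\<lambda>f. f x) -` (- V))" using UV(2) by (rule closed_preimage)
  qed (use UV(3-5) in auto)
qed

lemma closure_of_point:
  assumes Cl: "(C, l) \<in> Sigma_set A"
  shows "Sigma_star A closure_of {(C, l)} = points_above A C {l}"
proof
  have C: "C \<in> abelian_subalgebras A" and l: "l \<in> gelfand_spectrum C"
    using Cl unfolding Sigma_set_def by auto
  show "Sigma_star A closure_of {(C, l)} \<subseteq> points_above A C {l}"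
    using closed_points_above[OF C closed_singleton_fun] Cl restr_self[OF l]
    by (intro closure_of_minimal) (auto simp: mem_points_above)
  show "points_above A C {l} \<subseteq> Sigma_star A closure_of {(C, l)}"
  proof
    fix p assume p_above: "p \<in> points_above A C {l}"
    obtain D \<mu> where p_eq: "p = (D, \<mu>)" by (cases p)
    have p: "p = (D, \<mu>)" "(D, \<mu>) \<in> Sigma_set A" "C \<subseteq> D" "restr C \<mu> = l"
      using p_above unfolding p_eq mem_points_above by auto
    have "(C, l) \<in> Sigma_star A closure_of {(C, l)}"
      using Cl by (intro closure_of_subset[THEN subsetD]) (auto simp: topspace_Sigma_star)
    then have "(C, restr C \<mu>) \<in> Sigma_star A closure_of {(C, l)}" using p(4) by simp
    then show "p \<in> Sigma_star A closure_of {(C, l)}"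
      using closedin_Sigma_star_up[OF closedin_closure_of p(2) C p(3)] p(1) by blast
  qed
qed

definition irreducible_in :: "'a topology \<Rightarrow> 'a set \<Rightarrow> bool" where
  "irreducible_in X F \<longleftrightarrow> (\<forall>F1 F2. closedin X F1 \<longrightarrow> closedin X F2 \<longrightarrow>
     F = F1 \<union> F2 \<longrightarrow> F = F1 \<or> F = F2)"

lemma irreducible_in_cover:
  assumes "irreducible_in X F" "closedin X F" "closedin X F1" "closedin X F2" "F \<subseteq> F1 \<union> F2"
  shows "F \<subseteq> F1 \<or> F \<subseteq> F2"
proof -
  have "F = (F \<inter> F1) \<union> (F \<inter> F2)" using assms(5) by blast
  then have "F = F \<inter> F1 \<or> F = F \<inter> F2"
    using assms(1-4) unfolding irreducible_in_def by (blast intro: closedin_Int)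
  then show ?thesis by blast
qed

text \<open>If C is minimal among the algebras over which F has points, then every point of F lies
  above C with trace in the slice of F over C: the points of F outside the open set of points
  below C form a proper closed part of F.\<close>
lemma irreducible_above_minimal:
  assumes F: "closedin (Sigma_star A) F" "irreducible_in (Sigma_star A) F"
    and C: "C \<in> abelian_subalgebras A" and l0: "(C, l0) \<in> F"
    and minimal: "\<forall>D \<in> abelian_subalgebras A. D \<subset> C \<longrightarrow> slice F D = {}"
  shows "F \<subseteq> points_above A C (slice F C)"
proof -
  have Fsub: "F \<subseteq> Sigma_set A" using F(1) closedin_subset topspace_Sigma_star by blast
  have "F \<subseteq> points_above A C (slice F C) \<union> (topspace (Sigma_star A) - points_below A C)"
  proof
    fix p assume "p \<in> F"
    then obtain D \<mu> where p: "p = (D, \<mu>)" "(D, \<mu>) \<in> F" by (cases p) auto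
    then have D: "D \<in> abelian_subalgebras A" "\<mu> \<in> gelfand_spectrum D"
      using Fsub unfolding Sigma_set_def by auto
    show "p \<in> points_above A C (slice F C) \<union> (topspace (Sigma_star A) - points_below A C)"
    proof (cases "D \<subseteq> C")
      case True
      have "\<mu> \<in> slice F D" using p(2) unfolding slice_def by simp
      then have "D = C" using minimal D(1) True by blast
      then show ?thesis using p Fsub restr_self[OF D(2)] by (auto simp: mem_points_above slice_def)
    qed (use p Fsub topspace_Sigma_star in \<open>auto simp: points_below_def\<close>)
  qed
  moreover have "closedin (Sigma_star A) (points_above A C (slice F C))"
    by (rule closedin_points_above[OF C closedin_Sigma_star_slice[OF F(1) C]])
  moreover have "closedin (Sigma_star A) (topspace (Sigma_star A) - points_below A C)"
    by (rule closedin_diff[OF closedin_topspace openin_points_below[OF C]])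
  moreover have "\<not> F \<subseteq> topspace (Sigma_star A) - points_below A C"
    using l0 Fsub unfolding points_below_def by auto
  ultimately show ?thesis using irreducible_in_cover[OF F(2,1)] by blast
qed

text \<open>If all of F lies above C, the slice of F over C has at most one point: two distinct
  characters there are separated by a closed cover of the spectrum, which splits F.\<close>
lemma irreducible_slice_subsingleton:
  assumes F: "closedin (Sigma_star A) F" "irreducible_in (Sigma_star A) F"
    and C: "C \<in> abelian_subalgebras A" and F_above: "F \<subseteq> points_above A C (slice F C)"
    and l0: "l0 \<in> slice F C" and l1: "l1 \<in> slice F C"
  shows "l0 = l1"
proof (rule ccontr)
  assume "l0 \<noteq> l1"
  then obtain S T where ST: "closed S" "closed T" "S \<union> T = UNIV" "l0 \<notin> S" "l1 \<notin> T"
    by (rule closed_cover_separating_fun)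
  have in_spectrum: "l \<in> slice F C \<Longrightarrow> (C, l) \<in> F \<and> restr C l = l" for l
    using F(1) closedin_subset topspace_Sigma_star restr_self
    unfolding slice_def Sigma_set_def by fastforce
  have "F \<subseteq> points_above A C S \<union> points_above A C T"
    using F_above ST(3) unfolding points_above_def by blast
  then have "F \<subseteq> points_above A C S \<or> F \<subseteq> points_above A C T"
    using irreducible_in_cover[OF F(2,1)] closed_points_above[OF C ST(1)]
      closed_points_above[OF C ST(2)] by blast
  then show False
    using in_spectrum[OF l0] in_spectrum[OF l1] ST(4,5) by (auto simp: mem_points_above)
qed

theorem lemma2p26:
  fixes A :: "('h::chilbert_space \<Rightarrow> 'h) set"
    and F :: "(('h \<Rightarrow> 'h) set \<times> (('h \<Rightarrow> 'h) \<Rightarrow> complex)) set"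
    and C :: "('h \<Rightarrow> 'h) set"
  assumes "von_neumann_algebra A"
    and "closedin (Sigma_star A) F"
    and "\<forall>F1 F2. closedin (Sigma_star A) F1 \<longrightarrow> closedin (Sigma_star A) F2 \<longrightarrow>
           F = F1 \<union> F2 \<longrightarrow> F = F1 \<or> F = F2"
    and "C \<in> abelian_subalgebras A"
    and "slice F C \<noteq> {}"
    and "\<forall>D \<in> abelian_subalgebras A. D \<subset> C \<longrightarrow> slice F D = {}"
  shows "\<exists>!l. l \<in> gelfand_spectrum C \<and> F = (Sigma_star A) closure_of {(C, l)}"
proof -
  have irr: "irreducible_in (Sigma_star A) F" using assms(3) unfolding irreducible_in_def .
  have Fsub: "F \<subseteq> Sigma_set A" using assms(2) closedin_subset topspace_Sigma_star by blast
  obtain l0 where l0: "l0 \<in> slice F C" using assms(5) by blast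
  then have l0F: "(C, l0) \<in> F" unfolding slice_def by simp
  have F_above: "F \<subseteq> points_above A C (slice F C)"
    using irreducible_above_minimal[OF assms(2) irr assms(4) l0F assms(6)] .
  have single: "slice F C = {l0}"
    using irreducible_slice_subsingleton[OF assms(2) irr assms(4) F_above l0] l0 by blast
  have closure: "Sigma_star A closure_of {(C, l0)} = points_above A C {l0}"
    using closure_of_point l0F Fsub by blast
  have "F \<subseteq> Sigma_star A closure_of {(C, l0)}" using F_above unfolding single closure .
  moreover have "Sigma_star A closure_of {(C, l0)} \<subseteq> F"
    using l0F by (intro closure_of_minimal[OF _ assms(2)]) simp
  ultimately have "F = Sigma_star A closure_of {(C, l0)}" by blast
  moreover have "l0 \<in> gelfand_spectrum C" using l0F Fsub unfolding Sigma_set_def by auto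
  moreover have "l = l0" if "F = Sigma_star A closure_of {(C, l)}" "l \<in> gelfand_spectrum C" for l
  proof -
    have "(C, l) \<in> F"
      using that assms(4) closure_of_subset[of "{(C, l)}" "Sigma_star A"]
      by (auto simp: topspace_Sigma_star Sigma_set_def)
    then show ?thesis using single unfolding slice_def by auto
  qed
  ultimately show ?thesis by blast
qed

end
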